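(* Let $\mu$ be a probability measure on $[0,1]$, absolutely continuous with continuous density $f_\mu$, that is symmetric ($f_\mu(x)=f_\mu(1-x)$ for all $x\in[0,1]$) and single-peaked, and let $q\in(0,1)$. Then the median mechanism, i.e. the percentile mechanism $\mathcal{PM}_p$ with $p=\frac12$, is optimal.
   Context: Single-peaked: there is $m\in[0,1]$ such that $f_\mu$ is non-decreasing on $[0,m]$, non-increasing on $[m,1]$, and $m$ is the unique maximizer of $f_\mu$. Single-facility setting: $n$ agents at $\vec x\in[0,1]^n$; a facility at $y$ with capacity $q$ accommodates the $\lfloor qn\rfloor$ agents closest to $y$ (ties arbitrary); an accommodated agent $i$ gets utility $1-|x_i-y|$, others $0$; normalized social welfare $SW(\vec x,y)=\frac1n\sum_i u_i$. $\mathcal{PM}_p$ places the facility at the $(\lfloor p(n-1)\rfloor+1)$-th smallest reported position. $R_{\mu,q}(y)$ is the smallest $r\ge0$ with $\mu([y-r,y+r])=q$, and $\mathcal{W}(y)=\int_{[y-R_{\mu,q}(y),y+R_{\mu,q}(y)]}|x-y|\,d\mu(x)$. With $X_1,\dots,X_n$ i.i.d. of law $\mu$, $\mathcal{PM}_p$ is optimal if $\lim_{n\to\infty}\mathbb{E}[SW(\vec X,\mathcal{PM}_p(\vec X))]$ exists and equals $\max_{y\in[0,1]}(q-\mathcal{W}(y))$. *)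

theory Defs
  imports "HOL-Probability.Probability"
begin

definition dens_measure :: "(real \<Rightarrow> real) \<Rightarrow> real measure" where
  "dens_measure f = density lborel (\<lambda>x. ennreal (f x * indicator {0..1} x))"

definition single_peaked :: "(real \<Rightarrow> real) \<Rightarrow> bool" where
  "single_peaked f \<longleftrightarrow> (\<exists>m\<in>{0..1}.
      mono_on {0..m} f \<and> antimono_on {m..1} f \<and>
      (\<forall>x\<in>{0..1}. x \<noteq> m \<longrightarrow> f x < f m))"

definition symmetric_density :: "(real \<Rightarrow> real) \<Rightarrow> bool" where
  "symmetric_density f \<longleftrightarrow> (\<forall>x\<in>{0..1}. f x = f (1 - x))"

text \<open>Percentile mechanism: the (floor(p(n-1))+1)-th smallest of the n reported positions
  x 0, ..., x (n-1) (0-based index floor(p(n-1)) in the sorted list).\<close>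
definition PM :: "real \<Rightarrow> nat \<Rightarrow> (nat \<Rightarrow> real) \<Rightarrow> real" where
  "PM p n x = sort (map x [0..<n]) ! nat \<lfloor>p * real (n - 1)\<rfloor>"

text \<open>Normalized social welfare: the floor(q n) agents closest to y are accommodated, each
  obtaining 1 - |x_i - y|; the total does not depend on how ties are broken.\<close>
definition SW :: "real \<Rightarrow> nat \<Rightarrow> (nat \<Rightarrow> real) \<Rightarrow> real \<Rightarrow> real" where
  "SW q n x y = (\<Sum>j < nat \<lfloor>q * real n\<rfloor>.
       1 - sort (map (\<lambda>i. \<bar>x i - y\<bar>) [0..<n]) ! j) / real n"

definition R_rad :: "real measure \<Rightarrow> real \<Rightarrow> real \<Rightarrow> real" where
  "R_rad \<mu> q y = Inf {r. r \<ge> 0 \<and> measure \<mu> {y - r..y + r} = q}"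

definition W_cost :: "real measure \<Rightarrow> real \<Rightarrow> real \<Rightarrow> real" where
  "W_cost \<mu> q y = (LINT x:{y - R_rad \<mu> q y..y + R_rad \<mu> q y}|\<mu>. \<bar>x - y\<bar>)"

definition exp_SW :: "real measure \<Rightarrow> real \<Rightarrow> real \<Rightarrow> nat \<Rightarrow> real" where
  "exp_SW \<mu> q p n = (\<integral>X. SW q n X (PM p n X) \<partial>(PiM {..<n} (\<lambda>_. \<mu>)))"

definition PM_optimal :: "real measure \<Rightarrow> real \<Rightarrow> real \<Rightarrow> bool" where
  "PM_optimal \<mu> q p \<longleftrightarrow> (\<exists>L. (exp_SW \<mu> q p \<longlonglongrightarrow> L) \<and>
      (\<exists>y0\<in>{0..1}. L = q - W_cost \<mu> q y0 \<and> (\<forall>y\<in>{0..1}. q - W_cost \<mu> q y \<le> L)))"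

end

theory Submission
  imports Defs
begin

text \<open>The limit of the expected welfare of the median mechanism is computed for any atomless
  law on \<open>[0, 1]\<close> with a strict median \<open>c\<close>. By Hoeffding's inequality the empirical frequencies of
  finitely many intervals are close to their probabilities with probability tending to one. On
  that event the sample median is close to \<open>c\<close>, and \<open>SW q n X\<close> is 1-Lipschitz in the location;
  moreover \<open>SW q n X c\<close> and \<open>q - W_cost \<mu> q c\<close> are both approximated by the same layer-cake Riemann
  sum, built from the empirical resp. true mass of the intervals centred at \<open>c\<close>. Hence the welfare
  converges to \<open>q - W_cost \<mu> q c\<close>.

  For a symmetric single-peaked density the median is \<open>1/2\<close>. Sliding an interval towards the peak
  does not decrease its mass, so among intervals of a given radius the one centred at \<open>1/2\<close> is
  heaviest (Anderson's inequality); since \<open>W_cost\<close> is decreasing in these masses (layer cake again),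
  \<open>1/2\<close> minimises \<open>W_cost\<close>.\<close>

section \<open>Order statistics of a sample\<close>

lemma sort_nth_le_iff_card:
  fixes g :: "nat \<Rightarrow> 'a::linorder"
  assumes j: "j < n"
  shows "sort (map g [0..<n]) ! j \<le> t \<longleftrightarrow> j < card {i. i < n \<and> g i \<le> t}"
proof -
  define s where "s = sort (map g [0..<n])"
  define D where "D = {i. i < n \<and> s ! i \<le> t}"
  have len: "length s = n" and srt: "sorted s" by (simp_all add: s_def)
  have "card {i. i < n \<and> g i \<le> t} = length (filter (\<lambda>v. v \<le> t) (map g [0..<n]))"
    by (auto simp: length_filter_conv_card intro!: arg_cong[where f = card])
  also have "\<dots> = length (filter (\<lambda>v. v \<le> t) s)"
    unfolding s_def by (metis mset_filter mset_sort size_mset)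
  also have "\<dots> = card D"
    by (simp add: length_filter_conv_card len D_def)
  finally have card_eq: "card {i. i < n \<and> g i \<le> t} = card D" .
  have "s ! j \<le> t \<longleftrightarrow> j < card D"
  proof
    assume "s ! j \<le> t"
    then have "{..j} \<subseteq> D"
      using j srt len by (auto simp: D_def intro: order_trans[OF sorted_nth_mono])
    then show "j < card D"
      using card_mono[of D "{..j}"] by (simp add: D_def)
  next
    assume "j < card D"
    show "s ! j \<le> t"
    proof (rule ccontr)
      assume "\<not> s ! j \<le> t"
      then have "D \<subseteq> {..<j}"
        using srt len by (force simp: D_def not_less dest: sorted_nth_mono[of s j])
      then show False
        using card_mono[of "{..<j}" D] \<open>j < card D\<close> by simp
    qed
  qed
  then show ?thesis by (simp add: card_eq s_def D_def)
qed

lemma sort_nth_in_sample: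
  assumes "j < n"
  shows "\<exists>i<n. sort (map g [0..<n]) ! j = g i"
proof -
  have "sort (map g [0..<n]) ! j \<in> set (sort (map g [0..<n]))"
    using assms by (intro nth_mem) simp
  then show ?thesis by auto
qed

lemma sort_nth_abs_diff_le:
  fixes g g' :: "nat \<Rightarrow> real"
  assumes j: "j < n" and close: "\<And>i. i < n \<Longrightarrow> \<bar>g i - g' i\<bar> \<le> c"
  shows "\<bar>sort (map g [0..<n]) ! j - sort (map g' [0..<n]) ! j\<bar> \<le> c"
proof -
  have le: "sort (map h [0..<n]) ! j \<le> sort (map h' [0..<n]) ! j + c"
    if close': "\<And>i. i < n \<Longrightarrow> \<bar>h i - h' i\<bar> \<le> c" for h h' :: "nat \<Rightarrow> real"
  proof -
    define v where "v = sort (map h' [0..<n]) ! j"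
    have "j < card {i. i < n \<and> h' i \<le> v}"
      using sort_nth_le_iff_card[OF j, of h' v] by (simp add: v_def)
    also have "\<dots> \<le> card {i. i < n \<and> h i \<le> v + c}"
      using close' by (intro card_mono) (force simp: abs_le_iff)+
    finally show ?thesis
      using sort_nth_le_iff_card[OF j, of h "v + c"] by (simp add: v_def)
  qed
  show ?thesis
    using le[OF close] le[of g' g] close by (force simp: abs_le_iff abs_minus_commute)
qed

lemma borel_measurable_sort_nth:
  fixes g :: "nat \<Rightarrow> 'a \<Rightarrow> real"
  assumes g: "\<And>i. i < n \<Longrightarrow> g i \<in> borel_measurable M" and j: "j < n"
  shows "(\<lambda>\<omega>. sort (map (\<lambda>i. g i \<omega>) [0..<n]) ! j) \<in> borel_measurable M"
proof (subst borel_measurable_iff_le, intro allI)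
  fix a
  have "{\<omega> \<in> space M. sort (map (\<lambda>i. g i \<omega>) [0..<n]) ! j \<le> a}
      = {\<omega> \<in> space M. real j < (\<Sum>i<n. of_bool (g i \<omega> \<le> a))}"
    by (simp add: sort_nth_le_iff_card[OF j] sum_of_bool_eq Int_def)
  also have "\<dots> \<in> sets M"
    using g by measurable
  finally show "{\<omega> \<in> space M. sort (map (\<lambda>i. g i \<omega>) [0..<n]) ! j \<le> a} \<in> sets M" .
qed

lemma card_sort_nth_gt:
  fixes g :: "nat \<Rightarrow> 'a::linorder"
  assumes "k \<le> n"
  shows "card {j. j < k \<and> t < sort (map g [0..<n]) ! j} = k - min k (card {i. i < n \<and> g i \<le> t})"
proof -
  have "{j. j < k \<and> t < sort (map g [0..<n]) ! j} = {min k (card {i. i < n \<and> g i \<le> t})..<k}"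
    using sort_nth_le_iff_card[of _ n g t] assms by (auto simp: not_le[symmetric])
  then show ?thesis by simp
qed

section \<open>Layer-cake sums\<close>

definition grid_frac :: "nat \<Rightarrow> real \<Rightarrow> real" where
  "grid_frac m d = (\<Sum>l<m. of_bool (real l / real m < d)) / real m"

lemma grid_frac_bounds:
  assumes m: "m \<ge> 1" and d: "0 \<le> d" "d \<le> 1"
  shows "d \<le> grid_frac m d" "grid_frac m d \<le> d + 1 / real m"
proof -
  define K where "K = nat \<lceil>d * real m\<rceil>"
  have m_pos: "real m > 0" using m by simp
  have "0 \<le> d * real m" using d m_pos by simp
  then have K: "real K = of_int \<lceil>d * real m\<rceil>" "int K = \<lceil>d * real m\<rceil>"
    by (simp_all add: K_def)
  have "d * real m \<le> real m"
    using d m_pos by (simp add: mult_left_le_one_le)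
  then have "\<lceil>d * real m\<rceil> \<le> int m"
    by (simp add: ceiling_le_iff)
  then have "K \<le> m"
    using K(2) by linarith
  have below_K: "l < K \<longleftrightarrow> real l < d * real m" for l
  proof -
    have "l < K \<longleftrightarrow> int l < \<lceil>d * real m\<rceil>"
      using K(2) by linarith
    then show ?thesis
      by (simp add: less_ceiling_iff)
  qed
  have "{l. l < m \<and> real l / real m < d} = {..<K}"
    using \<open>K \<le> m\<close> m_pos by (auto simp: pos_divide_less_eq below_K[symmetric])
  then have frac_K: "grid_frac m d = real K / real m"
    by (simp add: grid_frac_def sum_of_bool_eq Int_def lessThan_def)
  show "d \<le> grid_frac m d"
    using le_of_int_ceiling[of "d * real m"] m_pos by (simp add: frac_K K pos_le_divide_eq)
  show "grid_frac m d \<le> d + 1 / real m"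
    using ceiling_correct[of "d * real m"] m_pos by (simp add: frac_K K divide_simps)
qed

text \<open>A Riemann sum for \<open>\<integral>\<^sub>0\<^sup>1 (c - min c (g t)) dt\<close>. If \<open>g t\<close> is the mass within distance \<open>t\<close>
  of a point, this integral is, by the layer-cake formula, the total distance to that point of the
  mass \<open>c\<close> closest to it; the welfare of a sample and \<open>W_cost\<close> are both approximated by it.\<close>
definition layer_sum :: "real \<Rightarrow> (real \<Rightarrow> real) \<Rightarrow> nat \<Rightarrow> real" where
  "layer_sum c g m = (\<Sum>l<m. c - min c (g (real l / real m))) / real m"

lemma layer_sum_antimono:
  assumes "\<And>t. 0 \<le> t \<Longrightarrow> g t \<le> g' t"
  shows "layer_sum c g' m \<le> layer_sum c g m"
proof -
  have "g (real l / real m) \<le> g' (real l / real m)" for l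
    using assms by simp
  then show ?thesis
    unfolding layer_sum_def
    by (intro divide_right_mono sum_mono diff_left_mono min.mono order_refl) simp_all
qed

lemma layer_sum_diff_le:
  assumes m: "m \<ge> 1"
    and close: "\<And>l. l < m \<Longrightarrow> \<bar>g (real l / real m) - g' (real l / real m)\<bar> \<le> \<delta>"
  shows "\<bar>layer_sum c g m - layer_sum c' g' m\<bar> \<le> \<bar>c - c'\<bar> + \<delta>"
proof -
  have layer_diff: "\<bar>(c - min c x) - (c' - min c' x')\<bar> \<le> \<bar>c - c'\<bar> + \<bar>x - x'\<bar>" for x x' :: real
    by (auto simp: min_def abs_le_iff)
  have "\<bar>\<Sum>l<m. (c - min c (g (real l / real m))) - (c' - min c' (g' (real l / real m)))\<bar>
      \<le> (\<Sum>l<m. \<bar>c - c'\<bar> + \<delta>)"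
  proof (rule order_trans[OF sum_abs sum_mono])
    fix l assume "l \<in> {..<m}"
    then show "\<bar>(c - min c (g (real l / real m))) - (c' - min c' (g' (real l / real m)))\<bar> \<le> \<bar>c - c'\<bar> + \<delta>"
      using layer_diff[of "g (real l / real m)" "g' (real l / real m)"] close[of l] by simp
  qed
  also have "\<dots> = (\<bar>c - c'\<bar> + \<delta>) * real m"
    by simp
  finally show ?thesis
    using m by (simp add: layer_sum_def sum_subtractf diff_divide_distrib[symmetric] abs_divide pos_divide_le_eq)
qed

definition empirical_mass :: "nat \<Rightarrow> (nat \<Rightarrow> real) \<Rightarrow> real \<Rightarrow> real \<Rightarrow> real" where
  "empirical_mass n X y t = real (card {i. i < n \<and> \<bar>X i - y\<bar> \<le> t}) / real n"

lemma sum_grid_frac_sorted_eq_layer_sum: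
  assumes k: "k \<le> n"
  shows "(\<Sum>j<k. grid_frac m (sort (map (\<lambda>i. \<bar>X i - y\<bar>) [0..<n]) ! j)) / real n
       = layer_sum (real k / real n) (empirical_mass n X y) m"
proof -
  define s where "s = sort (map (\<lambda>i. \<bar>X i - y\<bar>) [0..<n])"
  define N where "N t = card {i. i < n \<and> \<bar>X i - y\<bar> \<le> t}" for t
  have scale: "(real k - real (min k (N t))) / real n
      = real k / real n - min (real k / real n) (real (N t) / real n)" for t
    by (cases "n = 0") (auto simp: min_def diff_divide_distrib divide_le_cancel)
  have "(\<Sum>j<k. grid_frac m (s ! j)) = (\<Sum>j<k. \<Sum>l<m. of_bool (real l / real m < s ! j)) / real m"
    by (simp only: grid_frac_def sum_divide_distrib)
  also have "\<dots> = (\<Sum>l<m. \<Sum>j<k. of_bool (real l / real m < s ! j)) / real m"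
    by (subst sum.swap) (rule refl)
  also have "\<dots> = (\<Sum>l<m. real (k - min k (N (real l / real m)))) / real m"
    by (simp add: sum_of_bool_eq Int_def lessThan_def card_sort_nth_gt[OF k] s_def N_def)
  finally have "(\<Sum>j<k. grid_frac m (s ! j)) / real n
      = (\<Sum>l<m. (real k - real (min k (N (real l / real m)))) / real n) / real m"
    by (simp add: sum_divide_distrib mult.commute)
  then show ?thesis
    unfolding scale by (simp add: layer_sum_def empirical_mass_def N_def s_def)
qed

section \<open>Welfare of a sample\<close>

lemma capacity_le:
  assumes "q \<le> 1"
  shows "nat \<lfloor>q * real n\<rfloor> \<le> n"
proof -
  have "q * real n \<le> real n"
    using mult_right_mono[OF assms, of "real n"] by simp
  then show ?thesis
    by (simp add: nat_le_iff floor_le_iff)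
qed

lemma SW_lipschitz:
  assumes q: "q \<le> 1"
  shows "\<bar>SW q n X y - SW q n X y'\<bar> \<le> \<bar>y - y'\<bar>"
proof -
  define k where "k = nat \<lfloor>q * real n\<rfloor>"
  define s where "s z = sort (map (\<lambda>i. \<bar>X i - z\<bar>) [0..<n])" for z
  have k: "k \<le> n" using capacity_le[OF q] by (simp add: k_def)
  have "\<bar>\<Sum>j<k. s y' ! j - s y ! j\<bar> \<le> (\<Sum>j<k. \<bar>y - y'\<bar>)"
    using k by (intro order_trans[OF sum_abs sum_mono], unfold s_def, intro sort_nth_abs_diff_le) auto
  also have "\<dots> \<le> \<bar>y - y'\<bar> * real n"
    using mult_left_mono[of "real k" "real n" "\<bar>y - y'\<bar>"] k by (simp add: mult.commute)
  finally have "\<bar>\<Sum>j<k. s y' ! j - s y ! j\<bar> \<le> \<bar>y - y'\<bar> * real n" .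
  moreover have "SW q n X y - SW q n X y' = (\<Sum>j<k. s y' ! j - s y ! j) / real n"
    by (simp add: SW_def k_def s_def diff_divide_distrib[symmetric] sum_subtractf[symmetric])
  ultimately show ?thesis
    by (cases "n = 0") (simp_all add: abs_divide pos_divide_le_eq)
qed

lemma SW_bounds:
  assumes q: "q \<le> 1" and X: "\<And>i. i < n \<Longrightarrow> X i \<in> {0..1}" and y: "y \<in> {0..1}"
  shows "0 \<le> SW q n X y" "SW q n X y \<le> 1"
proof -
  define k where "k = nat \<lfloor>q * real n\<rfloor>"
  define s where "s = sort (map (\<lambda>i. \<bar>X i - y\<bar>) [0..<n])"
  have k: "k \<le> n" using capacity_le[OF q] by (simp add: k_def)
  have s: "0 \<le> 1 - s ! j \<and> 1 - s ! j \<le> 1" if "j < k" for j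
    using sort_nth_in_sample[of j n "\<lambda>i. \<bar>X i - y\<bar>"] that k X y by (force simp: s_def)
  have SW: "SW q n X y = (\<Sum>j<k. 1 - s ! j) / real n"
    by (simp add: SW_def k_def s_def)
  show "0 \<le> SW q n X y"
    unfolding SW by (intro divide_nonneg_nonneg sum_nonneg) (use s in auto)
  have "(\<Sum>j<k. 1 - s ! j) \<le> real n"
    using sum_mono[of "{..<k}" "\<lambda>j. 1 - s ! j" "\<lambda>_. 1"] s k by simp
  then show "SW q n X y \<le> 1"
    unfolding SW by (cases "n = 0") (simp_all add: divide_le_eq)
qed

lemma SW_layer_sum_approx:
  assumes q: "q \<le> 1" and m: "m \<ge> 1"
    and X: "\<And>i. i < n \<Longrightarrow> X i \<in> {0..1}" and y: "y \<in> {0..1}"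
  defines "a \<equiv> real (nat \<lfloor>q * real n\<rfloor>) / real n"
  shows "\<bar>SW q n X y - (a - layer_sum a (empirical_mass n X y) m)\<bar> \<le> 1 / real m"
proof -
  define k where "k = nat \<lfloor>q * real n\<rfloor>"
  define s where "s = sort (map (\<lambda>i. \<bar>X i - y\<bar>) [0..<n])"
  have k: "k \<le> n" using capacity_le[OF q] by (simp add: k_def)
  have s: "0 \<le> s ! j \<and> s ! j \<le> 1" if "j < k" for j
    using sort_nth_in_sample[of j n "\<lambda>i. \<bar>X i - y\<bar>"] that k X y by (force simp: s_def)
  define S where "S = (\<Sum>j<k. s ! j)"
  define E where "E = (\<Sum>j<k. grid_frac m (s ! j))"
  have "S \<le> E"
    unfolding S_def E_def by (rule sum_mono) (use s grid_frac_bounds(1)[OF m] in auto)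
  have "E \<le> (\<Sum>j<k. s ! j + 1 / real m)"
    unfolding E_def by (rule sum_mono) (use s grid_frac_bounds(2)[OF m] in auto)
  also have "\<dots> \<le> S + real n / real m"
    using k by (simp add: S_def sum.distrib divide_right_mono)
  finally have E_S: "0 \<le> E - S" "E - S \<le> real n / real m"
    using \<open>S \<le> E\<close> by simp_all
  have "E / real n = layer_sum a (empirical_mass n X y) m"
    unfolding E_def s_def a_def k_def using k[unfolded k_def] by (rule sum_grid_frac_sorted_eq_layer_sum)
  moreover have "SW q n X y = a - S / real n"
    by (simp add: SW_def a_def k_def S_def s_def sum_subtractf diff_divide_distrib)
  ultimately have "\<bar>SW q n X y - (a - layer_sum a (empirical_mass n X y) m)\<bar> = (E - S) / real n"
    using divide_right_mono[OF \<open>S \<le> E\<close>, of "real n"] by (simp add: diff_divide_distrib)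
  also have "\<dots> \<le> 1 / real m"
    using E_S by (cases "n = 0") (simp_all add: divide_le_eq)
  finally show ?thesis .
qed

lemma capacity_ratio_tendsto:
  assumes "0 \<le> q"
  shows "(\<lambda>n. real (nat \<lfloor>q * real n\<rfloor>) / real n) \<longlonglongrightarrow> q"
proof -
  have "\<bar>real (nat \<lfloor>q * real n\<rfloor>) / real n - q\<bar> \<le> 1 / real n" if "n \<ge> 1" for n
  proof -
    have "real (nat \<lfloor>q * real n\<rfloor>) = of_int \<lfloor>q * real n\<rfloor>"
      using assms by simp
    then have "\<bar>real (nat \<lfloor>q * real n\<rfloor>) - q * real n\<bar> \<le> 1"
      using floor_correct[of "q * real n"] by linarith
    moreover have "real (nat \<lfloor>q * real n\<rfloor>) / real n - q = (real (nat \<lfloor>q * real n\<rfloor>) - q * real n) / real n"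
      using that by (simp add: field_simps)
    ultimately show ?thesis
      by (simp add: abs_divide divide_right_mono)
  qed
  then have "\<forall>\<^sub>F n in sequentially. \<bar>real (nat \<lfloor>q * real n\<rfloor>) / real n - q\<bar> \<le> 1 / real n"
    unfolding eventually_sequentially by blast
  then have "(\<lambda>n. \<bar>real (nat \<lfloor>q * real n\<rfloor>) / real n - q\<bar>) \<longlonglongrightarrow> 0"
    by (rule tendsto_sandwich[OF _ _ tendsto_const lim_1_over_n, rotated]) simp
  then show ?thesis
    by (simp only: tendsto_rabs_zero_iff LIM_zero_iff)
qed

section \<open>Concentration of empirical frequencies\<close>

lemma indep_vars_PiM_coordinates:
  assumes M: "\<And>i. i \<in> I \<Longrightarrow> prob_space (M i)" and I: "I \<noteq> {}"
  shows "prob_space.indep_vars (PiM I M) M (\<lambda>i x. x i) I"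
proof -
  interpret P: prob_space "PiM I M" by (rule prob_space_PiM) (use M in auto)
  have "distr (PiM I M) (PiM I M) (\<lambda>x. restrict x I) = distr (PiM I M) (PiM I M) (\<lambda>x. x)"
    by (rule distr_cong) (auto simp: space_PiM)
  also have "\<dots> = PiM I (\<lambda>i. distr (PiM I M) (M i) (\<lambda>x. x i))"
    using M by (auto intro!: PiM_cong simp: distr_PiM_component)
  finally show ?thesis
    by (subst P.indep_vars_iff_distr_eq_PiM'[OF I]) (auto intro: measurable_component_singleton)
qed

definition freq_deviation :: "real measure \<Rightarrow> nat \<Rightarrow> real set \<Rightarrow> real \<Rightarrow> (nat \<Rightarrow> real) set" where
  "freq_deviation M n A \<gamma> = {X \<in> space (PiM {..<n} (\<lambda>_. M)).
      \<gamma> \<le> \<bar>(\<Sum>i<n. indicator A (X i)) / real n - measure M A\<bar>}"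

lemma freq_deviation_sets:
  assumes "A \<in> sets M"
  shows "freq_deviation M n A \<gamma> \<in> sets (PiM {..<n} (\<lambda>_. M))"
  unfolding freq_deviation_def using assms by measurable

lemma prob_freq_deviation_le:
  assumes M: "prob_space M" and A: "A \<in> sets M" and n: "n \<ge> 1" and \<gamma>: "\<gamma> \<ge> 0"
  shows "measure (PiM {..<n} (\<lambda>_. M)) (freq_deviation M n A \<gamma>) \<le> 2 * exp (-2 * \<gamma>\<^sup>2) ^ n"
proof -
  let ?P = "PiM {..<n} (\<lambda>_. M)"
  interpret P: prob_space ?P by (rule prob_space_PiM) (use M in auto)
  have A_meas: "(indicator A :: real \<Rightarrow> real) \<in> borel_measurable M" using A by simp
  have expect: "P.expectation (\<lambda>X. indicator A (X i)) = measure M A" if "i < n" for i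
  proof -
    have "integral\<^sup>L (distr ?P M (\<lambda>X. X i)) (indicator A :: real \<Rightarrow> real)
        = P.expectation (\<lambda>X. indicator A (X i))"
      by (rule integral_distr) (use that A_meas in auto)
    moreover have "distr ?P M (\<lambda>X. X i) = M"
      using that M by (intro distr_PiM_component) auto
    ultimately show ?thesis
      using A by simp
  qed
  interpret H: Hoeffding_ineq ?P "{..<n}" "\<lambda>i X. indicator A (X i)" "\<lambda>_. 0" "\<lambda>_. 1" "real n * measure M A"
  proof unfold_locales
    have "P.indep_vars (\<lambda>_. M) (\<lambda>i X. X i) {..<n}"
      using indep_vars_PiM_coordinates[of "{..<n}" "\<lambda>_. M"] M n by (simp add: lessThan_empty_iff)
    then show "P.indep_vars (\<lambda>_. borel) (\<lambda>i X. indicator A (X i) :: real) {..<n}"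
      by (rule P.indep_vars_compose2) (rule A_meas)
    show "AE X in ?P. indicator A (X i) \<in> {0..(1::real)}" for i
      by (rule AE_I2) (simp add: indicator_def)
    show "real n * measure M A \<equiv> (\<Sum>i\<in>{..<n}. P.expectation (\<lambda>X. indicator A (X i)))"
      by (rule eq_reflection) (simp add: expect)
  qed simp
  have scaled: "real n * \<gamma> \<le> \<bar>s - real n * p\<bar> \<longleftrightarrow> \<gamma> \<le> \<bar>s / real n - p\<bar>" for s p :: real
  proof -
    have "s - real n * p = real n * (s / real n - p)"
      using n by (simp add: field_simps)
    then show ?thesis
      using n by (simp add: abs_mult)
  qed
  have "{X \<in> space ?P. real n * \<gamma> \<le> \<bar>(\<Sum>i\<in>{..<n}. indicator A (X i)) - real n * measure M A\<bar>}
      = freq_deviation M n A \<gamma>"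
    by (simp only: freq_deviation_def scaled)
  moreover have "P.prob {X \<in> space ?P. real n * \<gamma> \<le> \<bar>(\<Sum>i\<in>{..<n}. indicator A (X i)) - real n * measure M A\<bar>}
      \<le> 2 * exp (-2 * (real n * \<gamma>)\<^sup>2 / (\<Sum>i\<in>{..<n}. (1 - 0)\<^sup>2))"
    using n \<gamma> by (intro H.Hoeffding_ineq_abs_ge) auto
  moreover have "exp (-2 * (real n * \<gamma>)\<^sup>2 / (\<Sum>i\<in>{..<n}. (1 - 0)\<^sup>2)) = exp (-2 * \<gamma>\<^sup>2) ^ n"
    using n by (simp add: power2_eq_square exp_of_nat_mult[symmetric])
  ultimately show ?thesis by simp
qed

lemma prob_freq_deviation_tendsto_0:
  assumes M: "prob_space M" and A: "A \<in> sets M" and \<gamma>: "\<gamma> > 0"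
  shows "(\<lambda>n. measure (PiM {..<n} (\<lambda>_. M)) (freq_deviation M n A \<gamma>)) \<longlonglongrightarrow> 0"
proof (rule tendsto_sandwich[of "\<lambda>_. 0" _ _ "\<lambda>n. 2 * exp (-2 * \<gamma>\<^sup>2) ^ n"])
  show "\<forall>\<^sub>F n in sequentially. measure (PiM {..<n} (\<lambda>_. M)) (freq_deviation M n A \<gamma>) \<le> 2 * exp (-2 * \<gamma>\<^sup>2) ^ n"
    using eventually_ge_at_top[of 1] by eventually_elim (use prob_freq_deviation_le M A \<gamma> in auto)
  have "exp (-2 * \<gamma>\<^sup>2) < 1" using \<gamma> by simp
  then show "(\<lambda>n. 2 * exp (-2 * \<gamma>\<^sup>2) ^ n) \<longlonglongrightarrow> 0"
    by (intro tendsto_mult_right_zero LIMSEQ_power_zero) simp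
qed auto

lemma (in prob_space) abs_expectation_diff_le:
  assumes h: "h \<in> borel_measurable M" "AE x in M. 0 \<le> h x \<and> h x \<le> 1"
    and L: "0 \<le> L" "L \<le> 1" and B: "B \<in> events" and c: "0 \<le> c"
    and close: "AE x in M. x \<notin> B \<longrightarrow> \<bar>h x - L\<bar> \<le> c"
  shows "\<bar>expectation h - L\<bar> \<le> c + prob B"
proof -
  have "AE x in M. norm (h x) \<le> 1"
    using h(2) by eventually_elim auto
  then have int_h: "integrable M h"
    using h(1) by (rule integrable_const_bound)
  have int_B: "integrable M (\<lambda>x. c + indicator B x :: real)"
    using B by (intro Bochner_Integration.integrable_add integrable_real_indicator) (simp_all add: less_top[symmetric])
  have "\<bar>expectation h - L\<bar> = \<bar>expectation (\<lambda>x. h x - L)\<bar>"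
    using int_h prob_space by simp
  also have "\<dots> \<le> expectation (\<lambda>x. \<bar>h x - L\<bar>)"
    using integral_norm_bound[of M "\<lambda>x. h x - L"] by simp
  also have "\<dots> \<le> expectation (\<lambda>x. c + indicator B x)"
  proof (rule integral_mono_AE)
    show "AE x in M. \<bar>h x - L\<bar> \<le> c + indicator B x"
      using h(2) close by eventually_elim (use L c in \<open>auto simp: indicator_def abs_le_iff\<close>)
  qed (use int_h int_B in auto)
  also have "\<dots> = expectation (\<lambda>_. c) + expectation (indicator B)"
    using B by (intro Bochner_Integration.integral_add) (simp_all add: less_top[symmetric])
  also have "\<dots> = c + prob B"
    using B by (simp add: prob_space less_top[symmetric])
  finally show ?thesis .
qed

section \<open>The sample median\<close>

lemma PM_index_less:
  assumes "p \<le> 1" "n \<ge> 1"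
  shows "nat \<lfloor>p * real (n - 1)\<rfloor> < n"
proof -
  have "p * real (n - 1) \<le> real (n - 1)"
    using mult_right_mono[OF assms(1), of "real (n - 1)"] by simp
  then have "\<lfloor>p * real (n - 1)\<rfloor> \<le> \<lfloor>real (n - 1)\<rfloor>"
    by (rule floor_mono)
  then have "nat \<lfloor>p * real (n - 1)\<rfloor> \<le> n - 1"
    by (simp add: nat_le_iff)
  then show ?thesis
    using assms(2) by linarith
qed

lemma PM_in_sample:
  assumes "p \<le> 1" "n \<ge> 1"
  shows "\<exists>i<n. PM p n X = X i"
  unfolding PM_def by (rule sort_nth_in_sample[OF PM_index_less[OF assms]])

lemma half_index_bounds:
  assumes "n \<ge> 1"
  shows "real n / 2 \<le> real (nat \<lfloor>1/2 * real (n - 1)\<rfloor>) + 1"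
    and "real (nat \<lfloor>1/2 * real (n - 1)\<rfloor>) < real n / 2"
proof -
  have "1/2 * real (n - 1) = real (n - 1) / real (2::nat)"
    by simp
  then have "nat \<lfloor>1/2 * real (n - 1)\<rfloor> = (n - 1) div 2"
    by (simp only: floor_divide_of_nat_eq nat_int)
  then show "real n / 2 \<le> real (nat \<lfloor>1/2 * real (n - 1)\<rfloor>) + 1"
    and "real (nat \<lfloor>1/2 * real (n - 1)\<rfloor>) < real n / 2"
    using assms by linarith+
qed

lemma sum_indicator_eq_card:
  "(\<Sum>i<(n::nat). indicator A (X i) :: real) = real (card {i. i < n \<and> X i \<in> A})"
proof -
  have "(\<Sum>i<n. indicator A (X i) :: real) = (\<Sum>i<n. if X i \<in> A then 1 else 0)"
    by (simp add: indicator_def of_bool_def)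
  also have "\<dots> = (\<Sum>i\<in>{i \<in> {..<n}. X i \<in> A}. 1)"
    by (rule sum.inter_filter[symmetric]) simp
  also have "{i \<in> {..<n}. X i \<in> A} = {i. i < n \<and> X i \<in> A}"
    by auto
  finally show ?thesis
    by simp
qed

lemma PM_half_le_imp_freq_ge:
  assumes "n \<ge> 1" "PM (1/2) n X \<le> t"
  shows "1/2 \<le> (\<Sum>i<n. indicator {..t} (X i)) / real n"
proof -
  have idx: "nat \<lfloor>1/2 * real (n - 1)\<rfloor> < n"
    using assms by (intro PM_index_less) auto
  have "nat \<lfloor>1/2 * real (n - 1)\<rfloor> < card {i. i < n \<and> X i \<le> t}"
    using sort_nth_le_iff_card[OF idx, of X t] assms(2) unfolding PM_def by simp
  then show ?thesis
    using half_index_bounds(1)[OF assms(1)] assms(1)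
    by (simp add: sum_indicator_eq_card le_divide_eq)
qed

lemma PM_half_gt_imp_freq_lt:
  assumes "n \<ge> 1" "t < PM (1/2) n X"
  shows "(\<Sum>i<n. indicator {..t} (X i)) / real n < 1/2"
proof -
  have idx: "nat \<lfloor>1/2 * real (n - 1)\<rfloor> < n"
    using assms by (intro PM_index_less) auto
  have "card {i. i < n \<and> X i \<le> t} \<le> nat \<lfloor>1/2 * real (n - 1)\<rfloor>"
    using sort_nth_le_iff_card[OF idx, of X t] assms(2) unfolding PM_def by simp
  then show ?thesis
    using half_index_bounds(2)[OF assms(1)] assms(1)
    by (simp add: sum_indicator_eq_card divide_less_eq)
qed

lemma PM_half_close:
  assumes n: "n \<ge> 1" and X: "X \<in> space (PiM {..<n} (\<lambda>_. M))"
    and lo: "X \<notin> freq_deviation M n {..c - \<delta>} (1/2 - cdf M (c - \<delta>))"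
    and hi: "X \<notin> freq_deviation M n {..c + \<delta>} (cdf M (c + \<delta>) - 1/2)"
  shows "\<bar>PM (1/2) n X - c\<bar> \<le> \<delta>"
proof (rule ccontr)
  assume "\<not> ?thesis"
  then consider "PM (1/2) n X \<le> c - \<delta>" | "c + \<delta> < PM (1/2) n X"
    by linarith
  then show False
  proof cases
    case 1
    define fr where "fr = (\<Sum>i<n. indicator {..c - \<delta>} (X i)) / real n"
    have "1/2 \<le> fr"
      unfolding fr_def using n 1 by (rule PM_half_le_imp_freq_ge)
    then have "1/2 - cdf M (c - \<delta>) \<le> \<bar>fr - measure M {..c - \<delta>}\<bar>"
      unfolding cdf_def by linarith
    with lo X show False
      by (simp add: freq_deviation_def fr_def)
  next
    case 2
    define fr where "fr = (\<Sum>i<n. indicator {..c + \<delta>} (X i)) / real n"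
    have "fr < 1/2"
      unfolding fr_def using n 2 by (rule PM_half_gt_imp_freq_lt)
    then have "cdf M (c + \<delta>) - 1/2 \<le> \<bar>fr - measure M {..c + \<delta>}\<bar>"
      unfolding cdf_def by linarith
    with hi X show False
      by (simp add: freq_deviation_def fr_def)
  qed
qed

section \<open>Atomless distributions on the unit interval\<close>

definition centered_mass :: "real measure \<Rightarrow> real \<Rightarrow> real \<Rightarrow> real" where
  "centered_mass M y t = measure M {y - t..y + t}"

locale atomless_unit_distribution = real_distribution M for M :: "real measure" +
  assumes measure_singleton: "measure M {x} = 0"
    and AE_unit_interval: "AE x in M. x \<in> {0..1}"
begin

lemma isCont_cdf_atomless: "isCont (cdf M) x"
  using isCont_cdf measure_singleton by simp

lemma measure_atLeastAtMost_cdf: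
  assumes "a \<le> b"
  shows "measure M {a..b} = cdf M b - cdf M a"
proof -
  have "{a..b} = {a} \<union> {a<..b}"
    using assms by auto
  then have "measure M {a..b} = measure M {a<..b}"
    using finite_measure_Union[of "{a}" "{a<..b}"] measure_singleton by simp
  then show ?thesis
    using assms cdf_diff_eq[of a b] by (cases "a = b") auto
qed

lemma measure_unit_interval: "measure M {0..1} = 1"
  using prob_eq_1[of "{0..1}"] AE_unit_interval by simp

lemma centered_mass_eq_cdf: "0 \<le> t \<Longrightarrow> centered_mass M y t = cdf M (y + t) - cdf M (y - t)"
  unfolding centered_mass_def by (rule measure_atLeastAtMost_cdf) simp

lemma centered_mass_mono: "0 \<le> t \<Longrightarrow> t \<le> t' \<Longrightarrow> centered_mass M y t \<le> centered_mass M y t'"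
  unfolding centered_mass_def by (intro finite_measure_mono) auto

lemma continuous_on_centered_mass: "continuous_on {0..} (centered_mass M y)"
proof -
  have "continuous_on {0..} (\<lambda>t. cdf M (y + t) - cdf M (y - t))"
    by (intro continuous_at_imp_continuous_on ballI continuous_intros isCont_o2[OF _ isCont_cdf_atomless])
  then show ?thesis
    by (rule continuous_on_eq) (simp add: centered_mass_eq_cdf)
qed

lemma R_rad_mass:
  assumes y: "y \<in> {0..1}" and q: "0 \<le> q" "q \<le> 1"
  shows "0 \<le> R_rad M q y" "centered_mass M y (R_rad M q y) = q"
proof -
  define S where "S = {r \<in> {0..}. centered_mass M y r = q}"
  have "closed S"
    unfolding S_def by (rule continuous_closed_preimage_constant[OF continuous_on_centered_mass]) auto
  moreover have "S \<noteq> {}"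
  proof -
    have "centered_mass M y 0 \<le> q"
      using q measure_singleton by (simp add: centered_mass_def)
    moreover have "q \<le> centered_mass M y 1"
      using measure_unit_interval finite_measure_mono[of "{0..1}" "{y - 1..y + 1}"] y q
      by (auto simp: centered_mass_def)
    moreover have "continuous_on {0..1} (centered_mass M y)"
      by (rule continuous_on_subset[OF continuous_on_centered_mass]) auto
    ultimately obtain r where "0 \<le> r" "r \<le> 1" "centered_mass M y r = q"
      using IVT'[of "centered_mass M y" 0 q 1] by auto
    then show ?thesis
      unfolding S_def by auto
  qed
  moreover have "bdd_below S"
    unfolding S_def by (auto intro: bdd_belowI[of _ 0])
  ultimately have "Inf S \<in> S"
    by (intro closed_contains_Inf)
  moreover have "R_rad M q y = Inf S"
    by (simp add: R_rad_def S_def centered_mass_def)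
  ultimately show "0 \<le> R_rad M q y" "centered_mass M y (R_rad M q y) = q"
    by (simp_all add: S_def)
qed

lemma measure_R_ball_beyond:
  assumes y: "y \<in> {0..1}" and q: "0 \<le> q" "q \<le> 1" and t: "0 \<le> t"
  defines "R \<equiv> R_rad M q y"
  shows "measure M ({y - R..y + R} \<inter> {x. t < \<bar>x - y\<bar>}) = q - min q (centered_mass M y t)"
proof (cases "t < R")
  case True
  then have "{y - R..y + R} \<inter> {x. t < \<bar>x - y\<bar>} = {y - R..y + R} - {y - t..y + t}"
    by auto
  moreover have "centered_mass M y t \<le> q"
    using centered_mass_mono[OF t, of R y] True R_rad_mass[OF y q] by (simp add: R_def)
  ultimately show ?thesis
    using True R_rad_mass[OF y q] finite_measure_Diff[of "{y - R..y + R}" "{y - t..y + t}"]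
    by (simp add: R_def centered_mass_def)
next
  case False
  then have "{y - R..y + R} \<inter> {x. t < \<bar>x - y\<bar>} = {}"
    by auto
  moreover have "q \<le> centered_mass M y t"
    using centered_mass_mono[of R t y] False R_rad_mass[OF y q] by (simp add: R_def)
  ultimately show ?thesis
    by simp
qed

text \<open>Replacing \<open>\<bar>x - y\<bar>\<close> by \<open>grid_frac m \<bar>x - y\<bar>\<close> turns the integrand of \<open>W_cost\<close> into an
  average of indicators of the shells of \<open>measure_R_ball_beyond\<close>.\<close>
lemma integral_grid_frac_R_ball:
  assumes y: "y \<in> {0..1}" and q: "0 \<le> q" "q \<le> 1"
  defines "B \<equiv> {y - R_rad M q y..y + R_rad M q y}"
  shows "integrable M (\<lambda>x. indicator B x * grid_frac m \<bar>x - y\<bar>)"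
    and "(\<integral>x. indicator B x * grid_frac m \<bar>x - y\<bar> \<partial>M) = layer_sum q (centered_mass M y) m"
proof -
  define Sh where "Sh l = B \<inter> {x. real l / real m < \<bar>x - y\<bar>}" for l
  have [measurable]: "Sh l \<in> sets borel" for l
    unfolding Sh_def B_def by measurable
  have shells: "(\<Sum>l<m. indicator (Sh l) x) / real m = indicator B x * grid_frac m \<bar>x - y\<bar>" for x
    by (cases "x \<in> B") (simp_all add: Sh_def grid_frac_def indicator_def)
  show "integrable M (\<lambda>x. indicator B x * grid_frac m \<bar>x - y\<bar>)"
    unfolding shells[symmetric]
    by (intro integrable_divide Bochner_Integration.integrable_sum integrable_real_indicator)
       (simp_all add: less_top[symmetric])
  have "(\<integral>x. indicator B x * grid_frac m \<bar>x - y\<bar> \<partial>M) = (\<Sum>l<m. measure M (Sh l)) / real m"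
    unfolding shells[symmetric]
    by (simp add: Bochner_Integration.integral_sum less_top[symmetric])
  also have "\<dots> = layer_sum q (centered_mass M y) m"
    unfolding layer_sum_def Sh_def B_def using measure_R_ball_beyond[OF y q] by simp
  finally show "(\<integral>x. indicator B x * grid_frac m \<bar>x - y\<bar> \<partial>M) = layer_sum q (centered_mass M y) m" .
qed

lemma W_cost_layer_sum_bounds:
  assumes y: "y \<in> {0..1}" and q: "0 \<le> q" "q \<le> 1" and m: "m \<ge> 1"
  shows "W_cost M q y \<le> layer_sum q (centered_mass M y) m"
    and "layer_sum q (centered_mass M y) m \<le> W_cost M q y + q / real m"
proof -
  define B where "B = {y - R_rad M q y..y + R_rad M q y}"
  have [measurable]: "B \<in> sets borel"
    unfolding B_def by measurable
  note int_shells = integral_grid_frac_R_ball(1)[OF y q, of m, folded B_def]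
  note int_eq = integral_grid_frac_R_ball(2)[OF y q, of m, folded B_def]
  have mass_B: "measure M B = q"
    using R_rad_mass[OF y q] by (simp add: B_def centered_mass_def)
  have W: "W_cost M q y = (\<integral>x. indicator B x * \<bar>x - y\<bar> \<partial>M)"
    by (simp add: W_cost_def set_lebesgue_integral_def B_def)
  have "AE x in M. norm (indicator B x * \<bar>x - y\<bar>) \<le> 1"
    using AE_unit_interval by eventually_elim (use y in \<open>auto simp: indicator_def\<close>)
  then have int_dist: "integrable M (\<lambda>x. indicator B x * \<bar>x - y\<bar>)"
    by (rule integrable_const_bound) measurable
  have int_B: "integrable M (\<lambda>x. indicator B x / real m)"
    by (intro integrable_divide integrable_real_indicator) (simp_all add: less_top[symmetric])
  have grid: "indicator B x * \<bar>x - y\<bar> \<le> indicator B x * grid_frac m \<bar>x - y\<bar>"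
      "indicator B x * grid_frac m \<bar>x - y\<bar> \<le> indicator B x * \<bar>x - y\<bar> + indicator B x / real m"
    if "x \<in> {0..1}" for x
  proof -
    have "0 \<le> \<bar>x - y\<bar>" "\<bar>x - y\<bar> \<le> 1"
      using that y by auto
    from grid_frac_bounds[OF m this]
    show "indicator B x * \<bar>x - y\<bar> \<le> indicator B x * grid_frac m \<bar>x - y\<bar>"
      "indicator B x * grid_frac m \<bar>x - y\<bar> \<le> indicator B x * \<bar>x - y\<bar> + indicator B x / real m"
      by (cases "x \<in> B", simp_all)+
  qed
  have "W_cost M q y \<le> (\<integral>x. indicator B x * grid_frac m \<bar>x - y\<bar> \<partial>M)"
    unfolding W using AE_unit_interval
    by (rule integral_mono_AE[OF int_dist int_shells, OF eventually_mono]) (rule grid(1))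
  then show "W_cost M q y \<le> layer_sum q (centered_mass M y) m"
    unfolding int_eq .
  have "layer_sum q (centered_mass M y) m \<le> (\<integral>x. indicator B x * \<bar>x - y\<bar> + indicator B x / real m \<partial>M)"
    unfolding int_eq[symmetric] using AE_unit_interval
    by (rule integral_mono_AE[OF int_shells Bochner_Integration.integrable_add[OF int_dist int_B], OF eventually_mono])
       (rule grid(2))
  also have "\<dots> = W_cost M q y + q / real m"
    using int_dist int_B mass_B by (simp add: W Bochner_Integration.integral_add)
  finally show "layer_sum q (centered_mass M y) m \<le> W_cost M q y + q / real m" .
qed

lemma W_cost_bounds:
  assumes y: "y \<in> {0..1}" and q: "0 \<le> q" "q \<le> 1"
  shows "0 \<le> W_cost M q y" "W_cost M q y \<le> q"
proof -
  show "0 \<le> W_cost M q y"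
    unfolding W_cost_def set_lebesgue_integral_def by (rule integral_nonneg_AE) (simp add: indicator_def)
  have "layer_sum q (centered_mass M y) 1 = q"
    using q measure_singleton by (simp add: layer_sum_def centered_mass_def)
  then show "W_cost M q y \<le> q"
    using W_cost_layer_sum_bounds(1)[OF y q, of 1] by simp
qed

lemma W_cost_le_if_centered_mass_le:
  assumes c: "c \<in> {0..1}" and y: "y \<in> {0..1}" and q: "0 \<le> q" "q \<le> 1"
    and mass: "\<And>t. 0 \<le> t \<Longrightarrow> centered_mass M y t \<le> centered_mass M c t"
  shows "W_cost M q c \<le> W_cost M q y"
proof (rule LIMSEQ_le_const)
  show "(\<lambda>m. W_cost M q y + q / real m) \<longlonglongrightarrow> W_cost M q y"
    using tendsto_add[OF tendsto_const tendsto_mult_right_zero[OF lim_1_over_n, of q]] by simp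
  have "W_cost M q c \<le> W_cost M q y + q / real m" if "m \<ge> 1" for m
  proof -
    have "W_cost M q c \<le> layer_sum q (centered_mass M c) m"
      using W_cost_layer_sum_bounds(1)[OF c q that] .
    also have "\<dots> \<le> layer_sum q (centered_mass M y) m"
      using mass by (rule layer_sum_antimono)
    also have "\<dots> \<le> W_cost M q y + q / real m"
      using W_cost_layer_sum_bounds(2)[OF y q that] .
    finally show ?thesis .
  qed
  then show "\<exists>N. \<forall>m\<ge>N. W_cost M q c \<le> W_cost M q y + q / real m"
    by blast
qed

abbreviation sample :: "nat \<Rightarrow> (nat \<Rightarrow> real) measure" where
  "sample n \<equiv> PiM {..<n} (\<lambda>_. M)"

lemma prob_space_sample: "prob_space (sample n)"
  by (rule prob_space_PiM) (rule prob_space_axioms)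

lemma measurable_sample_component: "i < n \<Longrightarrow> (\<lambda>X. X i) \<in> borel_measurable (sample n)"
  using measurable_component_singleton[of i "{..<n}" "\<lambda>_. M"]
  by (simp add: measurable_cong_sets[OF refl events_eq_borel])

lemma AE_sample_unit_interval: "AE X in sample n. \<forall>i\<in>{..<n}. X i \<in> {0..1}"
proof (rule AE_finite_allI)
  show "AE X in sample n. X i \<in> {0..1}" if "i \<in> {..<n}" for i
    using AE_PiM_component[of "{..<n}" "\<lambda>_. M" i "\<lambda>x. x \<in> {0..1}"] that
      prob_space_axioms AE_unit_interval by simp
qed simp

lemma borel_measurable_SW_PM:
  assumes "p \<le> 1" "q \<le> 1" "n \<ge> 1"
  shows "(\<lambda>X. SW q n X (PM p n X)) \<in> borel_measurable (sample n)"
proof -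
  have PM: "(\<lambda>X. PM p n X) \<in> borel_measurable (sample n)"
    unfolding PM_def using assms measurable_sample_component
    by (intro borel_measurable_sort_nth PM_index_less)
  have "(\<lambda>X. sort (map (\<lambda>i. \<bar>X i - PM p n X\<bar>) [0..<n]) ! j) \<in> borel_measurable (sample n)"
    if "j < n" for j
    using that PM measurable_sample_component by (intro borel_measurable_sort_nth) auto
  then show ?thesis
    unfolding SW_def by measurable (use capacity_le[OF assms(2), of n] in auto)
qed

lemma SW_close_to_limit:
  assumes q: "0 \<le> q" "q \<le> 1" and m: "m \<ge> 1" and c: "c \<in> {0..1}"
    and X: "\<And>i. i < n \<Longrightarrow> X i \<in> {0..1}" "X \<in> space (sample n)"
    and good: "\<And>l. l < m \<Longrightarrow> X \<notin> freq_deviation M n {c - real l / real m..c + real l / real m} \<delta>"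
  defines "a \<equiv> real (nat \<lfloor>q * real n\<rfloor>) / real n"
  shows "\<bar>SW q n X c - (q - W_cost M q c)\<bar> \<le> 2 / real m + 2 * \<bar>a - q\<bar> + \<delta>"
proof -
  have "\<bar>empirical_mass n X c (real l / real m) - centered_mass M c (real l / real m)\<bar> \<le> \<delta>"
    if "l < m" for l
  proof -
    have "{i. i < n \<and> X i \<in> {c - real l / real m..c + real l / real m}}
        = {i. i < n \<and> \<bar>X i - c\<bar> \<le> real l / real m}"
      by (auto simp: abs_le_iff)
    then show ?thesis
      using good[OF that] X(2)
      by (simp add: freq_deviation_def empirical_mass_def centered_mass_def sum_indicator_eq_card)
  qed
  then have layers: "\<bar>layer_sum a (empirical_mass n X c) m - layer_sum q (centered_mass M c) m\<bar> \<le> \<bar>a - q\<bar> + \<delta>"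
    by (rule layer_sum_diff_le[OF m])
  have welfare: "\<bar>SW q n X c - (a - layer_sum a (empirical_mass n X c) m)\<bar> \<le> 1 / real m"
    unfolding a_def using q(2) m X(1) c by (rule SW_layer_sum_approx)
  have cost: "W_cost M q c \<le> layer_sum q (centered_mass M c) m"
    "layer_sum q (centered_mass M c) m \<le> W_cost M q c + 1 / real m"
    using W_cost_layer_sum_bounds[OF c q m] divide_right_mono[OF q(2), of "real m"] by simp_all
  obtain b where b: "b = \<bar>a - q\<bar>"
    by simp
  have "a - q \<le> b" "q - a \<le> b" "0 \<le> 1 / real m" "2 / real m = 2 * (1 / real m)"
    using b by auto
  then show ?thesis
    using layers welfare cost unfolding b[symmetric] abs_le_iff by linarith
qed

lemma SW_PM_half_close_to_limit:
  assumes q: "0 \<le> q" "q \<le> 1" and c: "c \<in> {0..1}" and n: "n \<ge> 1" and m: "m \<ge> 1"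
    and X: "\<And>i. i < n \<Longrightarrow> X i \<in> {0..1}" "X \<in> space (sample n)"
    and lo: "X \<notin> freq_deviation M n {..c - \<delta>} (1/2 - cdf M (c - \<delta>))"
    and hi: "X \<notin> freq_deviation M n {..c + \<delta>} (cdf M (c + \<delta>) - 1/2)"
    and shells: "\<And>l. l < m \<Longrightarrow> X \<notin> freq_deviation M n {c - real l / real m..c + real l / real m} \<delta>"
  defines "a \<equiv> real (nat \<lfloor>q * real n\<rfloor>) / real n"
  shows "\<bar>SW q n X (PM (1/2) n X) - (q - W_cost M q c)\<bar> \<le> 2 * \<delta> + 2 / real m + 2 * \<bar>a - q\<bar>"
proof -
  have "\<bar>PM (1/2) n X - c\<bar> \<le> \<delta>"
    by (rule PM_half_close[OF n X(2) lo hi])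
  then have "\<bar>SW q n X (PM (1/2) n X) - SW q n X c\<bar> \<le> \<delta>"
    using SW_lipschitz[OF q(2)] order_trans by blast
  moreover have "\<bar>SW q n X c - (q - W_cost M q c)\<bar> \<le> 2 / real m + 2 * \<bar>a - q\<bar> + \<delta>"
    unfolding a_def using X shells by (rule SW_close_to_limit[OF q m c])
  ultimately show ?thesis
    by (simp add: abs_le_iff)
qed

lemma exp_SW_half_deviation_le:
  assumes q: "0 \<le> q" "q \<le> 1" and c: "c \<in> {0..1}" and n: "n \<ge> 1" and m: "m \<ge> 1" and \<delta>: "0 \<le> \<delta>"
  defines "a \<equiv> real (nat \<lfloor>q * real n\<rfloor>) / real n"
    and "Lo \<equiv> freq_deviation M n {..c - \<delta>} (1/2 - cdf M (c - \<delta>))"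
    and "Hi \<equiv> freq_deviation M n {..c + \<delta>} (cdf M (c + \<delta>) - 1/2)"
    and "Shell \<equiv> \<lambda>l. freq_deviation M n {c - real l / real m..c + real l / real m} \<delta>"
  shows "\<bar>exp_SW M q (1/2) n - (q - W_cost M q c)\<bar>
    \<le> 2 * \<delta> + 2 / real m + 2 * \<bar>a - q\<bar>
       + (measure (sample n) Lo + measure (sample n) Hi + (\<Sum>l<m. measure (sample n) (Shell l)))"
proof -
  interpret S: prob_space "sample n" by (rule prob_space_sample)
  define Dev where "Dev = Lo \<union> Hi \<union> (\<Union>l<m. Shell l)"
  have events: "Lo \<in> S.events" "Hi \<in> S.events" "Shell l \<in> S.events" for l
    unfolding Lo_def Hi_def Shell_def by (auto intro!: freq_deviation_sets)
  have good: "\<bar>SW q n X (PM (1/2) n X) - (q - W_cost M q c)\<bar> \<le> 2 * \<delta> + 2 / real m + 2 * \<bar>a - q\<bar>"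
    if "\<forall>i\<in>{..<n}. X i \<in> {0..1}" "X \<in> space (sample n)" "X \<notin> Dev" for X
    unfolding a_def using that
    by (intro SW_PM_half_close_to_limit[OF q c n m]) (auto simp: Dev_def Lo_def Hi_def Shell_def)
  have close: "AE X in sample n. X \<notin> Dev \<longrightarrow>
      \<bar>SW q n X (PM (1/2) n X) - (q - W_cost M q c)\<bar> \<le> 2 * \<delta> + 2 / real m + 2 * \<bar>a - q\<bar>"
    using AE_sample_unit_interval AE_space by eventually_elim (use good in auto)
  have "AE X in sample n. 0 \<le> SW q n X (PM (1/2) n X) \<and> SW q n X (PM (1/2) n X) \<le> 1"
    using AE_sample_unit_interval
  proof eventually_elim
    case (elim X)
    then have "PM (1/2) n X \<in> {0..1}"
      using PM_in_sample[of "1/2" n X] n by auto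
    then show ?case
      using SW_bounds[OF q(2), of n X] elim by auto
  qed
  moreover have "0 \<le> q - W_cost M q c" "q - W_cost M q c \<le> 1"
    using W_cost_bounds[OF c q] q by auto
  moreover have "Dev \<in> S.events"
    unfolding Dev_def using events by auto
  ultimately have "\<bar>exp_SW M q (1/2) n - (q - W_cost M q c)\<bar>
      \<le> 2 * \<delta> + 2 / real m + 2 * \<bar>a - q\<bar> + measure (sample n) Dev"
    unfolding exp_SW_def using borel_measurable_SW_PM[of "1/2" q n] q n m \<delta> close
    by (intro S.abs_expectation_diff_le) auto
  also have "measure (sample n) Dev
      \<le> measure (sample n) Lo + measure (sample n) Hi + (\<Sum>l<m. measure (sample n) (Shell l))"
  proof -
    have "measure (sample n) Dev \<le> measure (sample n) (Lo \<union> Hi) + measure (sample n) (\<Union>l<m. Shell l)"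
      unfolding Dev_def using events by (intro measure_Un_le) auto
    also have "\<dots> \<le> measure (sample n) Lo + measure (sample n) Hi + (\<Sum>l<m. measure (sample n) (Shell l))"
      using events by (intro add_mono measure_Un_le measure_UNION_le) auto
    finally show ?thesis .
  qed
  finally show ?thesis
    by simp
qed

lemma exp_SW_half_tendsto:
  assumes q: "0 \<le> q" "q \<le> 1" and c: "c \<in> {0..1}"
    and median: "\<And>\<delta>. 0 < \<delta> \<Longrightarrow> cdf M (c - \<delta>) < 1/2 \<and> 1/2 < cdf M (c + \<delta>)"
  shows "exp_SW M q (1/2) \<longlonglongrightarrow> q - W_cost M q c"
proof (rule tendstoI)
  fix \<epsilon> :: real
  assume \<epsilon>: "0 < \<epsilon>"
  obtain m0 where "inverse (real (Suc m0)) < \<epsilon> / 8"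
    using reals_Archimedean[of "\<epsilon> / 8"] \<epsilon> by auto
  then obtain m :: nat where m: "m \<ge> 1" "2 / real m < \<epsilon> / 4"
    by (intro that[of "Suc m0"]) (auto simp: inverse_eq_divide)
  define \<delta> where "\<delta> = \<epsilon> / 8"
  have \<delta>: "0 < \<delta>" using \<epsilon> by (simp add: \<delta>_def)
  define P where "P n A \<gamma> = measure (sample n) (freq_deviation M n A \<gamma>)" for n A \<gamma>
  define b where "b n = 2 * \<delta> + 2 / real m + 2 * \<bar>real (nat \<lfloor>q * real n\<rfloor>) / real n - q\<bar>
    + (P n {..c - \<delta>} (1/2 - cdf M (c - \<delta>)) + P n {..c + \<delta>} (cdf M (c + \<delta>) - 1/2)
       + (\<Sum>l<m. P n {c - real l / real m..c + real l / real m} \<delta>))" for n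
  have "b \<longlonglongrightarrow> 2 * \<delta> + 2 / real m + 2 * \<bar>q - q\<bar> + (0 + 0 + (\<Sum>l<m. 0))"
    unfolding b_def P_def using median[OF \<delta>] \<delta> prob_space_axioms
    by (intro tendsto_intros capacity_ratio_tendsto q prob_freq_deviation_tendsto_0) auto
  moreover have "2 * \<delta> + 2 / real m < \<epsilon>"
    using m \<epsilon> by (simp add: \<delta>_def)
  ultimately have "\<forall>\<^sub>F n in sequentially. b n < \<epsilon>"
    by (intro order_tendstoD(2)) auto
  then show "\<forall>\<^sub>F n in sequentially. dist (exp_SW M q (1/2) n) (q - W_cost M q c) < \<epsilon>"
    using eventually_ge_at_top[of 1]
  proof eventually_elim
    case (elim n)
    have "\<bar>exp_SW M q (1/2) n - (q - W_cost M q c)\<bar> \<le> b n"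
      unfolding b_def P_def using \<delta> by (intro exp_SW_half_deviation_le[OF q c elim(2) m(1)]) auto
    then show ?case
      using elim(1) by (simp add: dist_real_def)
  qed
qed

end

section \<open>Symmetric single-peaked densities\<close>

locale symmetric_single_peaked_density =
  fixes f :: "real \<Rightarrow> real"
  assumes cont: "continuous_on {0..1} f"
    and nonneg: "\<forall>x\<in>{0..1}. f x \<ge> 0"
    and prob: "prob_space (dens_measure f)"
    and symmetric: "symmetric_density f"
    and peaked: "single_peaked f"
begin

definition dens :: "real \<Rightarrow> real" where
  "dens x = f x * indicator {0..1} x"

lemma dens_measure_eq: "dens_measure f = density lborel (\<lambda>x. ennreal (dens x))"
  by (simp add: dens_measure_def dens_def)

lemma borel_measurable_dens [measurable]: "dens \<in> borel_measurable borel"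
proof -
  have "(\<lambda>x. indicator {0..1} x *\<^sub>R f x) \<in> borel_measurable borel"
    by (rule borel_measurable_continuous_on_indicator[OF _ cont]) auto
  then show ?thesis
    unfolding dens_def by (simp add: mult.commute)
qed

lemma dens_nonneg: "0 \<le> dens x"
  using nonneg by (auto simp: dens_def indicator_def)

lemma f_reflect: "x \<in> {0..1} \<Longrightarrow> f (1 - x) = f x"
  using symmetric unfolding symmetric_density_def by (metis (no_types))

lemma dens_reflect: "dens (1 - x) = dens x"
  by (cases "x \<in> {0..1}") (auto simp: dens_def f_reflect indicator_def)

lemma emeasure_dens_measure:
  "A \<in> sets borel \<Longrightarrow> emeasure (dens_measure f) A = (\<integral>\<^sup>+x. ennreal (dens x) * indicator A x \<partial>lborel)"
  unfolding dens_measure_eq by (subst emeasure_density) auto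

lemma peak_at_half:
  shows "mono_on {0..1/2} f" and "\<And>x. x \<in> {0..1} \<Longrightarrow> x \<noteq> 1/2 \<Longrightarrow> f x < f (1/2)"
proof -
  obtain p where p: "p \<in> {0..1}" "mono_on {0..p} f" "\<forall>x\<in>{0..1}. x \<noteq> p \<longrightarrow> f x < f p"
    using peaked unfolding single_peaked_def by blast
  have "f (1 - p) = f p"
    using p(1) by (rule f_reflect)
  have "1 - p = p"
  proof (rule ccontr)
    assume "1 - p \<noteq> p"
    then have "f (1 - p) < f p"
      using p(1,3) by auto
    with \<open>f (1 - p) = f p\<close> show False
      by simp
  qed
  then have "p = 1/2"
    by simp
  then show "mono_on {0..1/2} f" "\<And>x. x \<in> {0..1} \<Longrightarrow> x \<noteq> 1/2 \<Longrightarrow> f x < f (1/2)"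
    using p by blast+
qed

lemma peak_value_pos: "0 < f (1/2)"
proof -
  have "f 0 < f (1/2)"
    by (rule peak_at_half(2)) auto
  moreover have "0 \<le> f 0"
    using nonneg by simp
  ultimately show ?thesis
    by linarith
qed

lemma dens_le_closer_to_half:
  assumes "x \<le> z" "x + z \<le> 1"
  shows "dens x \<le> dens z"
proof (cases "0 \<le> x")
  case False
  then show ?thesis
    using dens_nonneg[of z] by (simp add: dens_def)
next
  case True
  then have x: "x \<in> {0..1/2}" "z \<le> 1" and dens: "dens x = f x" "dens z = f z"
    using assms by (auto simp: dens_def)
  show ?thesis
  proof (cases "z \<le> 1/2")
    case True
    then show ?thesis
      using mono_onD[OF peak_at_half(1), of x z] x assms by (simp add: dens)
  next
    case False
    then have "f x \<le> f (1 - z)"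
      using mono_onD[OF peak_at_half(1), of x "1 - z"] x assms by simp
    also have "f (1 - z) = f z"
      using x(2) False by (intro f_reflect) auto
    finally show ?thesis
      by (simp add: dens)
  qed
qed

sublocale atomless_unit_distribution "dens_measure f"
proof (rule atomless_unit_distribution.intro)
  show "real_distribution (dens_measure f)"
    using prob by (simp add: real_distribution_def real_distribution_axioms_def dens_measure_def)
  show "atomless_unit_distribution_axioms (dens_measure f)"
  proof
    show "measure (dens_measure f) {x} = 0" for x
    proof -
      have "emeasure (dens_measure f) {x} = (\<integral>\<^sup>+y. ennreal (dens y) * indicator {x} y \<partial>lborel)"
        by (rule emeasure_dens_measure) simp
      also have "\<dots> = (\<integral>\<^sup>+y. 0 \<partial>(lborel :: real measure))"
      proof (rule nn_integral_cong_AE)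
        show "AE y in lborel. ennreal (dens y) * indicator {x} y = 0"
          using AE_lborel_singleton[of x] by eventually_elim simp
      qed
      finally show ?thesis
        by (simp add: measure_def)
    qed
    show "AE x in dens_measure f. x \<in> {0..1}"
      unfolding dens_measure_eq
    proof (subst AE_density)
      show "(\<lambda>x. ennreal (dens x)) \<in> borel_measurable lborel"
        by simp
      show "AE x in lborel. 0 < ennreal (dens x) \<longrightarrow> x \<in> {0..1}"
        by (auto simp: dens_def indicator_def)
    qed
  qed
qed

lemma measure_reflect:
  assumes [measurable]: "A \<in> sets borel"
  shows "measure (dens_measure f) ((\<lambda>x. 1 - x) -` A) = measure (dens_measure f) A"
proof -
  have "emeasure (dens_measure f) A = (\<integral>\<^sup>+x. ennreal (dens x) * indicator A x \<partial>lborel)"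
    by (rule emeasure_dens_measure) fact
  also have "\<dots> = ennreal \<bar>-1\<bar> * (\<integral>\<^sup>+x. ennreal (dens (1 + -1 * x)) * indicator A (1 + -1 * x) \<partial>lborel)"
    by (rule nn_integral_real_affine[where c = "-1" and t = 1 and f = "\<lambda>x. ennreal (dens x) * indicator A x"])
       auto
  also have "\<dots> = (\<integral>\<^sup>+x. ennreal (dens x) * indicator ((\<lambda>x. 1 - x) -` A) x \<partial>lborel)"
    using dens_reflect by (auto simp: indicator_def intro!: nn_integral_cong)
  also have "\<dots> = emeasure (dens_measure f) ((\<lambda>x. 1 - x) -` A)"
    using measurable_sets[OF _ assms, of "\<lambda>x. 1 - x" borel] by (intro emeasure_dens_measure[symmetric]) simp
  finally show ?thesis
    by (simp add: measure_def)
qed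

lemma measure_shift_towards_half:
  assumes "a \<le> b" "0 \<le> s" "b + b + s \<le> 1"
  shows "measure (dens_measure f) {a<..b} \<le> measure (dens_measure f) {a + s<..b + s}"
proof -
  have "emeasure (dens_measure f) {a<..b} = (\<integral>\<^sup>+x. ennreal (dens x) * indicator {a<..b} x \<partial>lborel)"
    by (rule emeasure_dens_measure) simp
  also have "\<dots> \<le> (\<integral>\<^sup>+x. ennreal (dens (s + 1 * x)) * indicator {a + s<..b + s} (s + 1 * x) \<partial>lborel)"
  proof (rule nn_integral_mono)
    fix x
    have "dens x \<le> dens (s + x)" if "x \<in> {a<..b}"
      using that assms by (intro dens_le_closer_to_half) auto
    then show "ennreal (dens x) * indicator {a<..b} x
        \<le> ennreal (dens (s + 1 * x)) * indicator {a + s<..b + s} (s + 1 * x)"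
      by (auto simp: indicator_def intro: ennreal_leI)
  qed
  also have "\<dots> = ennreal \<bar>1\<bar> * (\<integral>\<^sup>+x. ennreal (dens (s + 1 * x)) * indicator {a + s<..b + s} (s + 1 * x) \<partial>lborel)"
    by simp
  also have "\<dots> = (\<integral>\<^sup>+x. ennreal (dens x) * indicator {a + s<..b + s} x \<partial>lborel)"
    by (rule nn_integral_real_affine[symmetric, where c = 1 and t = s
          and f = "\<lambda>x. ennreal (dens x) * indicator {a + s<..b + s} x"]) auto
  also have "\<dots> = emeasure (dens_measure f) {a + s<..b + s}"
    by (rule emeasure_dens_measure[symmetric]) simp
  finally show ?thesis
    by (simp add: emeasure_eq_measure)
qed

lemma centered_mass_le_half:
  assumes t: "0 \<le> t"
  shows "centered_mass (dens_measure f) y t \<le> centered_mass (dens_measure f) (1/2) t"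
proof -
  have le_half: "centered_mass (dens_measure f) y t \<le> centered_mass (dens_measure f) (1/2) t"
    if "y < 1/2" for y
  proof -
    have "measure (dens_measure f) {y - t<..1/2 - t} \<le> measure (dens_measure f) {y - t + 2 * t<..1/2 - t + 2 * t}"
      using that t by (intro measure_shift_towards_half) auto
    also have "{y - t + 2 * t<..1/2 - t + 2 * t} = {y + t<..1/2 + t}"
      by (simp add: algebra_simps)
    finally show ?thesis
      using that t cdf_diff_eq[of "y - t" "1/2 - t"] cdf_diff_eq[of "y + t" "1/2 + t"]
      by (simp add: centered_mass_eq_cdf)
  qed
  have reflect: "centered_mass (dens_measure f) (1 - y) t = centered_mass (dens_measure f) y t"
  proof -
    have "(\<lambda>x. 1 - x) -` {y - t..y + t} = {(1 - y) - t..(1 - y) + t}"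
      by auto
    then show ?thesis
      using measure_reflect[of "{y - t..y + t}"] by (simp add: centered_mass_def)
  qed
  show ?thesis
  proof (cases "y < 1/2")
    case False
    show ?thesis
    proof (cases "y = 1/2")
      case False
      with \<open>\<not> y < 1/2\<close> have "1 - y < 1/2"
        by simp
      then show ?thesis
        using le_half reflect by metis
    qed (simp only: order_refl)
  qed (rule le_half)
qed

lemma cdf_reflect_half: "cdf (dens_measure f) (1/2 - d) + cdf (dens_measure f) (1/2 + d) = 1"
proof -
  have "(\<lambda>x. 1 - x) -` {..1/2 - d} = {1/2 + d..}"
    by auto
  then have "cdf (dens_measure f) (1/2 - d) = measure (dens_measure f) {1/2 + d..}"
    using measure_reflect[of "{..1/2 - d}"] by (simp add: cdf_def)
  also have "\<dots> = 1 - measure (dens_measure f) {..<1/2 + d}"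
    using prob_compl[of "{..<1/2 + d}"] by (simp add: Compl_eq_Diff_UNIV[symmetric] not_less)
  also have "measure (dens_measure f) {..<1/2 + d} = cdf (dens_measure f) (1/2 + d)"
    using finite_measure_Union[of "{..<1/2 + d}" "{1/2 + d}"] measure_singleton
    by (simp add: cdf_def ivl_disj_un_singleton(2)[symmetric])
  finally show ?thesis
    by simp
qed

text \<open>Continuity of \<open>f\<close> at the peak, where \<open>f\<close> is positive, keeps the density above \<open>f (1/2) / 2\<close>
  on a neighbourhood of \<open>1/2\<close>.\<close>
lemma measure_around_half_pos:
  assumes "0 < d"
  shows "0 < measure (dens_measure f) {1/2 - d<..1/2 + d}"
proof -
  obtain e where e: "0 < e" "\<And>x. x \<in> {0..1} \<Longrightarrow> dist x (1/2) < e \<Longrightarrow> dist (f x) (f (1/2)) < f (1/2) / 2"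
    using cont[unfolded continuous_on_iff, rule_format, of "1/2" "f (1/2) / 2"] peak_value_pos
    by auto
  define r where "r = min (min d (e / 2)) (1/2)"
  have r: "0 < r" "r \<le> d" "r \<le> 1/2"
    using e(1) assms by (auto simp: r_def)
  have f_large: "f (1/2) / 2 \<le> f x" if "x \<in> {1/2 - r<..1/2}" for x
  proof -
    have "x \<in> {0..1}" "dist x (1/2) < e"
      using that r e(1) by (auto simp: dist_real_def r_def)
    then have "dist (f x) (f (1/2)) < f (1/2) / 2"
      by (rule e(2))
    then show ?thesis
      unfolding dist_real_def abs_diff_less_iff by linarith
  qed
  have "ennreal (f (1/2) / 2 * r) = ennreal (f (1/2) / 2) * emeasure lborel {1/2 - r<..1/2}"
    using r peak_value_pos by (simp add: ennreal_mult[symmetric])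
  also have "\<dots> = (\<integral>\<^sup>+x. ennreal (f (1/2) / 2) * indicator {1/2 - r<..1/2} x \<partial>lborel)"
    by (rule nn_integral_cmult_indicator[symmetric]) simp
  also have "\<dots> \<le> (\<integral>\<^sup>+x. ennreal (dens x) * indicator {1/2 - d<..1/2 + d} x \<partial>lborel)"
    using r f_large by (intro nn_integral_mono) (auto simp: indicator_def dens_def intro!: ennreal_leI)
  also have "\<dots> = emeasure (dens_measure f) {1/2 - d<..1/2 + d}"
    by (rule emeasure_dens_measure[symmetric]) simp
  finally have "f (1/2) / 2 * r \<le> measure (dens_measure f) {1/2 - d<..1/2 + d}"
    by (simp add: emeasure_eq_measure ennreal_le_iff)
  moreover have "0 < f (1/2) / 2 * r"
    using r peak_value_pos by simp
  ultimately show ?thesis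
    by linarith
qed

lemma strict_median_half:
  assumes "0 < d"
  shows "cdf (dens_measure f) (1/2 - d) < 1/2" and "1/2 < cdf (dens_measure f) (1/2 + d)"
  using measure_around_half_pos[OF assms] cdf_diff_eq[of "1/2 - d" "1/2 + d"] cdf_reflect_half[of d] assms
  by simp_all

end

theorem theorem3p9:
  fixes f :: "real \<Rightarrow> real" and q :: real
  assumes "continuous_on {0..1} f"
    and "\<forall>x\<in>{0..1}. f x \<ge> 0"
    and "prob_space (dens_measure f)"
    and "symmetric_density f"
    and "single_peaked f"
    and "0 < q" and "q < 1"
  shows "PM_optimal (dens_measure f) q (1/2)"
proof -
  interpret symmetric_single_peaked_density f
    using assms by (simp add: symmetric_single_peaked_density_def)
  have q: "0 \<le> q" "q \<le> 1"
    using assms by simp_all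
  have "exp_SW (dens_measure f) q (1/2) \<longlonglongrightarrow> q - W_cost (dens_measure f) q (1/2)"
    using strict_median_half by (intro exp_SW_half_tendsto q) auto
  moreover have "W_cost (dens_measure f) q (1/2) \<le> W_cost (dens_measure f) q y" if "y \<in> {0..1}" for y
    using that centered_mass_le_half by (intro W_cost_le_if_centered_mass_le q) auto
  ultimately show ?thesis
    unfolding PM_optimal_def by (intro exI[of _ "q - W_cost (dens_measure f) q (1/2)"]) force
qed

end
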